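(* Let $0<\alpha\le 2$, $2\le\beta<4$, $\gamma\ge 1$, and let $\mu$ be a positive Borel measure on $[0,1)$ such that $\mu_n=\int_{[0,1)}t^n\,d\mu(t)=\mathcal{O}\big(n^{-(\frac{\alpha}{2}+\varepsilon)}\big)$ for some $\varepsilon>0$. Then the following are equivalent: (i) $\mu$ is a $\big(\gamma-\frac{\beta-\alpha}{2}\big)$-Carleson measure, i.e. $\sup_{t\in[0,1)}\frac{\mu([t,1))}{(1-t)^{\gamma-\frac{\beta-\alpha}{2}}}<\infty$; (ii) the operator $\mathcal{H}_{\mu,\gamma}$ is bounded from $\mathcal{D}_\alpha$ into $\mathcal{D}_\beta$.
   Context: $\mathbb{D}$ is the open unit disc. For $\alpha\in\mathbb{R}$, the Dirichlet-type space $\mathcal{D}_\alpha$ consists of analytic $f(z)=\sum_{n\ge0}a_nz^n$ on $\mathbb{D}$ with $\|f\|_{\mathcal{D}_\alpha}^2=\sum_{n=0}^\infty (n+1)^{1-\alpha}|a_n|^2<\infty$. For a positive Borel measure $\mu$ on $[0,1)$ and $\gamma>0$, the generalized Hilbert operator is defined on analytic $f(z)=\sum_k a_kz^k$ by $\mathcal{H}_{\mu,\gamma}(f)(z)=\sum_{n=0}^\infty\Big(\sum_{k=0}^\infty \mu_{n+k}a_k\Big)\frac{\Gamma(n+\gamma)}{n!\,\Gamma(\gamma)}z^n$, where $\mu_j=\int_{[0,1)}t^j\,d\mu(t)$ (under the stated moment decay, the inner series converge for $f\in\mathcal{D}_\alpha$). A positive Borel measure $\mu$ on $[0,1)$ is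 called an $s$-Carleson measure if $\sup_{t\in[0,1)}\mu([t,1))/(1-t)^s<\infty$. *)

theory Defs
  imports "HOL-Analysis.Analysis" "HOL-Library.Landau_Symbols"
begin

text \<open>Analytic functions on the unit disc are represented by their Taylor
coefficient sequences \<open>a :: nat \<Rightarrow> complex\<close>, f(z) = sum a n z^n.\<close>

definition D_normsq :: "real \<Rightarrow> (nat \<Rightarrow> complex) \<Rightarrow> real" where
  "D_normsq \<alpha> a = (\<Sum>n. (real n + 1) powr (1 - \<alpha>) * (cmod (a n))\<^sup>2)"

definition in_D :: "real \<Rightarrow> (nat \<Rightarrow> complex) \<Rightarrow> bool" where
  "in_D \<alpha> a \<longleftrightarrow> summable (\<lambda>n. (real n + 1) powr (1 - \<alpha>) * (cmod (a n))\<^sup>2)"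

definition D_norm :: "real \<Rightarrow> (nat \<Rightarrow> complex) \<Rightarrow> real" where
  "D_norm \<alpha> a = sqrt (D_normsq \<alpha> a)"

definition moment :: "real measure \<Rightarrow> nat \<Rightarrow> real" where
  "moment M j = (LINT t|M. t ^ j)"

definition borel_measure_01 :: "real measure \<Rightarrow> bool" where
  "borel_measure_01 M \<longleftrightarrow> sets M = sets (restrict_space borel {0..<1}) \<and> finite_measure M"

definition carleson :: "real \<Rightarrow> real measure \<Rightarrow> bool" where
  "carleson s M \<longleftrightarrow> bdd_above ((\<lambda>t. measure M {t..<1} / (1 - t) powr s) ` {0..<1})"

definition Hilbert_op :: "real measure \<Rightarrow> real \<Rightarrow> (nat \<Rightarrow> complex) \<Rightarrow> nat \<Rightarrow> complex" where
  "Hilbert_op M \<gamma> a n =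
     (\<Sum>k. complex_of_real (moment M (n + k)) * a k) *
     complex_of_real (Gamma (real n + \<gamma>) / (fact n * Gamma \<gamma>))"

definition Hilbert_bounded :: "real measure \<Rightarrow> real \<Rightarrow> real \<Rightarrow> real \<Rightarrow> bool" where
  "Hilbert_bounded M \<gamma> \<alpha> \<beta> \<longleftrightarrow>
     (\<exists>C. \<forall>a. in_D \<alpha> a \<longrightarrow>
        (\<forall>n. summable (\<lambda>k. complex_of_real (moment M (n + k)) * a k)) \<and>
        in_D \<beta> (Hilbert_op M \<gamma> a) \<and>
        D_norm \<beta> (Hilbert_op M \<gamma> a) \<le> C * D_norm \<alpha> a)"

end

theory Submission
  imports Defs "HOL-Real_Asymp.Real_Asymp"
begin

text \<open>
  Write \<open>s = \<gamma> - (\<beta> - \<alpha>) / 2\<close> and recall that \<open>\<Gamma>(n + \<gamma>) / (n! \<Gamma>(\<gamma>))\<close> is comparable to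
  \<open>(n + 1) powr (\<gamma> - 1)\<close>.

  (i) \<open>\<Longrightarrow>\<close> (ii): an \<open>s\<close>-Carleson measure has moments \<open>\<mu>\<^sub>n = O((n + 1) powr -s)\<close>, obtained by
  cutting \<open>[0,1)\<close> into the dyadic layers \<open>[1 - 2\<^sup>-\<^sup>j, 1)\<close>. If \<open>s \<le> \<alpha> / 2\<close>, the hypothesis on the
  moments gives the same bound with the exponent \<open>\<alpha> / 2 + \<epsilon>\<close> in place of \<open>s\<close>. Either way the moments decay
  like \<open>(n + 1) powr -s'\<close> with \<open>s' > \<alpha> / 2\<close> and \<open>s' \<ge> s\<close>. The operator is then dominated, in the
  natural \<open>\<ell>\<^sup>2\<close> coordinates of \<open>\<D>\<^sub>\<alpha>\<close> and \<open>\<D>\<^sub>\<beta>\<close>, by a positive kernel. The Schur test with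
  weights \<open>(n + 1) powr (-1/2)\<close> shows that this kernel is bounded on \<open>\<ell>\<^sup>2\<close>; its row and column sums
  are estimated by telescoping power sums.

  (ii) \<open>\<Longrightarrow>\<close> (i): for \<open>t\<close> close to \<open>1\<close> take \<open>N \<approx> 1 / (8 (1 - t))\<close> and apply the operator to the
  indicator of \<open>{N..2N}\<close>. Every moment \<open>\<mu>\<^sub>j\<close> with \<open>j \<le> 4N\<close> is at least \<open>\<mu>([t,1)) / 2\<close>, so the
  norm of the image is at least of order \<open>\<mu>([t,1)) N powr (1 + \<gamma> - \<beta>/2)\<close>. The input has norm of
  order \<open>N powr (1 - \<alpha>/2)\<close>, which gives \<open>\<mu>([t,1)) \<lesssim> (1 - t) powr s\<close>.
\<close>

section \<open>The Gamma weights\<close>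

definition gamma_weight :: "real \<Rightarrow> nat \<Rightarrow> real" where
  "gamma_weight g n = Gamma (real n + g) / (fact n * Gamma g)"

lemma gamma_weight_pos: "g > 0 \<Longrightarrow> gamma_weight g n > 0"
  unfolding gamma_weight_def by (intro divide_pos_pos mult_pos_pos Gamma_real_pos) auto

lemma gamma_weight_eq_pochhammer:
  assumes "g > 0"
  shows "gamma_weight g n = pochhammer g n / fact n"
proof -
  have "g \<notin> \<int>\<^sub>\<le>\<^sub>0" using assms by (auto elim!: nonpos_Ints_cases)
  then show ?thesis
    unfolding gamma_weight_def using pochhammer_Gamma[of g n] by (simp add: add.commute)
qed

lemma gamma_weight_asymp:
  assumes "g > 0"
  shows "(\<lambda>n. gamma_weight g n / (real n + 1) powr (g - 1)) \<longlonglongrightarrow> 1 / Gamma g"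
proof -
  \<comment> \<open>\<open>Gamma_series g n = n! n powr g / (g (g + 1) \<dots> (g + n))\<close> tends to \<open>\<Gamma>(g)\<close> (Euler), and \<open>r\<close>
    is the factor turning it into the ratio in question.\<close>
  define r where "r n = real n powr g * (real n + 1) powr (1 - g) / (g + real n)" for n
  have "r \<longlonglongrightarrow> 1" unfolding r_def by real_asymp
  then have "(\<lambda>n. r n / Gamma_series g n) \<longlonglongrightarrow> 1 / Gamma g"
    using Gamma_real_pos[OF assms] by (intro tendsto_divide Gamma_series_LIMSEQ) auto
  moreover have "r n / Gamma_series g n = gamma_weight g n / (real n + 1) powr (g - 1)"
    if "n > 0" for n
  proof -
    have "exp (g * ln (real n)) = real n powr g" using that by (simp add: powr_def mult.commute)
    then have "Gamma_series g n = fact n * real n powr g / (pochhammer g n * (g + real n))"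
      unfolding Gamma_series_def by (simp add: pochhammer_Suc)
    moreover have "(real n + 1) powr (1 - g) = 1 / (real n + 1) powr (g - 1)"
      by (simp add: powr_diff powr_minus_divide)
    moreover have "pochhammer g n > 0" "real n powr g > 0" "(fact n :: real) > 0" "g + real n > 0"
      using that assms by (auto intro: pochhammer_pos)
    moreover have "(X * Y / D) / (F * X / (P * D)) = Y * P / F"
      if "X > 0" "D > 0" "F > 0" "P > 0" for X Y D F P :: real
      using that by (simp add: field_simps)
    ultimately show ?thesis
      unfolding r_def gamma_weight_eq_pochhammer[OF assms] by simp
  qed
  then have "eventually (\<lambda>n. r n / Gamma_series g n = gamma_weight g n / (real n + 1) powr (g - 1))
      sequentially"
    by (rule eventually_mono[OF eventually_gt_at_top[of 0]])
  ultimately show ?thesis by (rule Lim_transform_eventually)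
qed

lemma tendsto_pos_imp_bounded_away:
  fixes r :: "nat \<Rightarrow> real"
  assumes "r \<longlonglongrightarrow> L" "L > 0" "\<And>n. r n > 0"
  obtains c C where "c > 0" "\<And>n. c \<le> r n" "\<And>n. r n \<le> C"
proof -
  have "Bseq r" using assms(1) by (rule convergent_imp_Bseq[OF convergentI])
  then obtain C where C: "\<And>n. norm (r n) \<le> C" unfolding Bseq_def by blast
  have "(\<lambda>n. inverse (r n)) \<longlonglongrightarrow> inverse L" using assms by (intro tendsto_intros) auto
  then have "Bseq (\<lambda>n. inverse (r n))" by (rule convergent_imp_Bseq[OF convergentI])
  then obtain K where K: "K > 0" "\<And>n. norm (inverse (r n)) \<le> K" unfolding Bseq_def by blast
  have "1 / K \<le> r n" for n
  proof -
    have "inverse (r n) \<le> K" using K(2)[of n] assms(3)[of n] by simp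
    then show ?thesis using assms(3)[of n] K(1) by (simp add: field_simps)
  qed
  moreover have "r n \<le> C" for n using C[of n] by simp
  ultimately show thesis using K(1) by (intro that[of "1 / K" C]) auto
qed

lemma gamma_weight_bounds:
  assumes "g > 0"
  obtains c C where "c > 0"
    "\<And>n. c * (real n + 1) powr (g - 1) \<le> gamma_weight g n"
    "\<And>n. gamma_weight g n \<le> C * (real n + 1) powr (g - 1)"
proof -
  have "\<And>n. gamma_weight g n / (real n + 1) powr (g - 1) > 0" "1 / Gamma g > 0"
    using gamma_weight_pos[OF assms] Gamma_real_pos[OF assms] by auto
  then obtain c C where "c > 0"
    and c: "\<And>n. c \<le> gamma_weight g n / (real n + 1) powr (g - 1)"
    and C: "\<And>n. gamma_weight g n / (real n + 1) powr (g - 1) \<le> C"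
    using tendsto_pos_imp_bounded_away[OF gamma_weight_asymp[OF assms]] by metis
  show thesis
  proof (rule that[OF \<open>c > 0\<close>])
    fix n
    show "c * (real n + 1) powr (g - 1) \<le> gamma_weight g n"
      using c[of n] by (simp add: field_simps)
    show "gamma_weight g n \<le> C * (real n + 1) powr (g - 1)"
      using C[of n] by (simp add: field_simps)
  qed
qed

section \<open>Power sums\<close>

lemma powr_increment_ge:
  fixes a x :: real
  assumes "0 < a" "a < 1" "0 \<le> x"
  shows "a * (x + 1) powr (a - 1) \<le> (x + 1) powr a - x powr a"
proof (cases "x = 0")
  case True
  then show ?thesis using assms by simp
next
  case False
  have "\<exists>z. x < z \<and> z < x + 1 \<and> (x + 1) powr a - x powr a = (x + 1 - x) * (a * z powr (a - 1))"
    by (rule MVT2) (use False assms in \<open>auto intro!: has_real_derivative_powr\<close>)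
  then obtain z where z: "x < z" "z < x + 1" "(x + 1) powr a - x powr a = a * z powr (a - 1)"
    by auto
  have "(x + 1) powr (a - 1) \<le> z powr (a - 1)"
    using z False assms by (intro powr_mono2') auto
  then show ?thesis using z assms by simp
qed

lemma powr_neg_decrement_ge:
  fixes c x :: real
  assumes "0 < c" "0 < x"
  shows "c * (x + 1) powr (- c - 1) \<le> x powr (- c) - (x + 1) powr (- c)"
proof -
  have "\<exists>z. x < z \<and> z < x + 1 \<and>
      (x + 1) powr (- c) - x powr (- c) = (x + 1 - x) * (- c * z powr (- c - 1))"
  proof (rule MVT2)
    fix y assume "x \<le> y"
    then show "((\<lambda>y. y powr (- c)) has_real_derivative (- c * y powr (- c - 1))) (at y)"
      using assms has_real_derivative_powr[of y "- c"] by simp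
  qed simp
  then obtain z where z: "x < z" "z < x + 1"
    "(x + 1) powr (- c) - x powr (- c) = - c * z powr (- c - 1)"
    by auto
  have "(x + 1) powr (- c - 1) \<le> z powr (- c - 1)"
    using z assms by (intro powr_mono2') auto
  then have "c * (x + 1) powr (- c - 1) \<le> c * z powr (- c - 1)"
    using assms by (intro mult_left_mono) auto
  then show ?thesis using z by linarith
qed

lemma sum_powr_le:
  assumes "a > 0"
  obtains C where "C > 0" "\<And>N. (\<Sum>k<N. (real k + 1) powr (a - 1)) \<le> C * real N powr a"
proof (cases "a \<ge> 1")
  case True
  have "(\<Sum>k<N. (real k + 1) powr (a - 1)) \<le> 1 * real N powr a" for N
  proof -
    have "(\<Sum>k<N. (real k + 1) powr (a - 1)) \<le> (\<Sum>k<N. real N powr (a - 1))"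
      by (intro sum_mono powr_mono2) (use True in auto)
    also have "\<dots> = 1 * real N powr a"
      by (cases "N = 0") (simp_all add: powr_diff)
    finally show ?thesis .
  qed
  then show thesis by (intro that[of 1]) auto
next
  case False
  have "(\<Sum>k<N. (real k + 1) powr (a - 1)) \<le> 1 / a * real N powr a" for N
  proof (induction N)
    case (Suc N)
    have "(real N + 1) powr (a - 1) \<le> 1 / a * ((real N + 1) powr a - real N powr a)"
      using powr_increment_ge[of a "real N"] assms False by (simp add: field_simps)
    with Suc show ?case by (simp add: algebra_simps)
  qed simp
  then show thesis using assms by (intro that[of "1 / a"]) auto
qed

lemma sum_powr_tail_le:
  fixes c x :: real
  assumes "0 < c" "0 < x"
  shows "(\<Sum>j<N. (x + real j + 1) powr (- c - 1)) \<le> x powr (- c) / c"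
proof -
  have "(\<Sum>j<N. (x + real j + 1) powr (- c - 1)) \<le> (x powr (- c) - (x + real N) powr (- c)) / c"
  proof (induction N)
    case (Suc N)
    have "(x + real N + 1) powr (- c - 1)
        \<le> ((x + real N) powr (- c) - (x + real N + 1) powr (- c)) / c"
      using powr_neg_decrement_ge[of c "x + real N"] assms by (simp add: field_simps)
    with Suc show ?case by (simp add: diff_divide_distrib add_ac)
  qed simp
  also have "\<dots> \<le> x powr (- c) / c" using assms by (simp add: divide_right_mono)
  finally show ?thesis .
qed

lemma sum_powr_convolution_tail_le:
  fixes a s :: real
  assumes "0 < a" "a < s"
  shows "(\<Sum>j<N. (real n + real j + 2) powr (a - 1) * (2 * real n + real j + 2) powr (- s))
           \<le> (real n + 1) powr (a - s) / (s - a)"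
proof -
  have "(real n + real j + 2) powr (a - 1) * (2 * real n + real j + 2) powr (- s)
      \<le> (real n + 1 + real j + 1) powr (- (s - a) - 1)" for j
  proof -
    have "(real n + real j + 2) powr (a - 1) * (2 * real n + real j + 2) powr (- s)
        \<le> (real n + real j + 2) powr (a - 1) * (real n + real j + 2) powr (- s)"
      using assms by (intro mult_left_mono powr_mono2') auto
    also have "\<dots> = (real n + 1 + real j + 1) powr (- (s - a) - 1)"
      by (simp add: powr_add[symmetric] algebra_simps)
    finally show ?thesis .
  qed
  then have "(\<Sum>j<N. (real n + real j + 2) powr (a - 1) * (2 * real n + real j + 2) powr (- s))
      \<le> (\<Sum>j<N. (real n + 1 + real j + 1) powr (- (s - a) - 1))"
    by (rule sum_mono)
  also have "\<dots> \<le> (real n + 1) powr (a - s) / (s - a)"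
    using assms sum_powr_tail_le[of "s - a" "real n + 1" N] by simp
  finally show ?thesis .
qed

lemma sum_powr_convolution_le:
  fixes a s :: real
  assumes "0 < a" "a < s"
  obtains C where "C > 0"
    "\<And>n N. (\<Sum>k<N. (real k + 1) powr (a - 1) * (real n + real k + 1) powr (- s))
              \<le> C * (real n + 1) powr (a - s)"
proof -
  obtain C1 where "C1 > 0" and C1: "\<And>N. (\<Sum>k<N. (real k + 1) powr (a - 1)) \<le> C1 * real N powr a"
    using sum_powr_le[OF assms(1)] by blast
  have "(\<Sum>k<N. (real k + 1) powr (a - 1) * (real n + real k + 1) powr (- s))
      \<le> (C1 + 1 / (s - a)) * (real n + 1) powr (a - s)" for n N
  proof -
    define f where "f k = (real k + 1) powr (a - 1) * (real n + real k + 1) powr (- s)" for k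
    have head: "(\<Sum>k<Suc n. f k) \<le> C1 * (real n + 1) powr (a - s)"
    proof -
      have "(\<Sum>k<Suc n. f k) \<le> (\<Sum>k<Suc n. (real k + 1) powr (a - 1)) * (real n + 1) powr (- s)"
        unfolding sum_distrib_right f_def using assms
        by (intro sum_mono mult_left_mono powr_mono2') auto
      also have "\<dots> \<le> C1 * (real n + 1) powr a * (real n + 1) powr (- s)"
        using C1[of "Suc n"] by (intro mult_right_mono) (auto simp: add.commute)
      finally show ?thesis by (simp add: powr_add[symmetric] mult.assoc)
    qed
    have tail: "(\<Sum>j<N. f (Suc n + j)) \<le> (real n + 1) powr (a - s) / (s - a)"
      using sum_powr_convolution_tail_le[OF assms, of n N] unfolding f_def by (simp add: algebra_simps)
    have "(\<Sum>k<N. f k) \<le> (\<Sum>k<Suc n + N. f k)"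
      by (intro sum_mono2) (auto simp: f_def)
    also have "\<dots> = (\<Sum>k<Suc n. f k) + (\<Sum>j<N. f (Suc n + j))"
      by (induction N) (simp_all add: add_ac)
    finally show ?thesis
      using head tail unfolding f_def by (simp add: algebra_simps)
  qed
  moreover have "C1 + 1 / (s - a) > 0" using \<open>C1 > 0\<close> assms by (intro add_pos_pos) auto
  ultimately show thesis by (intro that) 
qed

section \<open>The Schur test\<close>

lemma schur_test_finite:
  fixes K :: "nat \<Rightarrow> nat \<Rightarrow> real"
  assumes "finite A" "finite B"
    and K: "\<And>n k. K n k \<ge> 0" and p: "\<And>n. p n > 0" and q: "\<And>k. q k > 0" and C: "C1 \<ge> 0" "C2 \<ge> 0"
    and row: "\<And>n. (\<Sum>k\<in>B. K n k * q k) \<le> C1 * p n"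
    and col: "\<And>k. (\<Sum>n\<in>A. K n k * p n) \<le> C2 * q k"
  shows "(\<Sum>n\<in>A. (\<Sum>k\<in>B. K n k * x k)\<^sup>2) \<le> C1 * C2 * (\<Sum>k\<in>B. (x k)\<^sup>2)"
proof -
  have cauchy_schwarz: "(\<Sum>k\<in>B. K n k * x k)\<^sup>2 \<le> C1 * p n * (\<Sum>k\<in>B. K n k * (x k)\<^sup>2 / q k)" for n
  proof -
    have "(\<Sum>k\<in>B. K n k * x k) = (\<Sum>k\<in>B. sqrt (K n k * q k) * (sqrt (K n k / q k) * x k))"
    proof (intro sum.cong refl)
      fix k
      have "sqrt (K n k * q k) * sqrt (K n k / q k) = K n k"
        using K[of n k] q[of k] by (simp add: real_sqrt_mult[symmetric])
      then show "K n k * x k = sqrt (K n k * q k) * (sqrt (K n k / q k) * x k)"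
        by (simp add: mult.assoc[symmetric])
    qed
    also have "(\<dots>)\<^sup>2 \<le> (\<Sum>k\<in>B. (sqrt (K n k * q k))\<^sup>2) * (\<Sum>k\<in>B. (sqrt (K n k / q k) * x k)\<^sup>2)"
      by (rule Cauchy_Schwarz_ineq_sum)
    also have "\<dots> = (\<Sum>k\<in>B. K n k * q k) * (\<Sum>k\<in>B. K n k * (x k)\<^sup>2 / q k)"
    proof -
      have "(sqrt (K n k * q k))\<^sup>2 = K n k * q k" "(sqrt (K n k / q k) * x k)\<^sup>2 = K n k * (x k)\<^sup>2 / q k"
        for k using K[of n k] q[of k] by (simp_all add: power_mult_distrib)
      then show ?thesis by simp
    qed
    also have "\<dots> \<le> C1 * p n * (\<Sum>k\<in>B. K n k * (x k)\<^sup>2 / q k)"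
      using K q by (intro mult_right_mono row sum_nonneg) (auto intro!: divide_nonneg_pos)
    finally show ?thesis .
  qed
  have "(\<Sum>n\<in>A. (\<Sum>k\<in>B. K n k * x k)\<^sup>2) \<le> (\<Sum>n\<in>A. C1 * p n * (\<Sum>k\<in>B. K n k * (x k)\<^sup>2 / q k))"
    by (intro sum_mono cauchy_schwarz)
  also have "\<dots> = C1 * (\<Sum>k\<in>B. (x k)\<^sup>2 / q k * (\<Sum>n\<in>A. K n k * p n))"
    by (simp add: sum_distrib_left sum_divide_distrib mult_ac sum.swap[of _ A])
  also have "\<dots> \<le> C1 * (\<Sum>k\<in>B. (x k)\<^sup>2 / q k * (C2 * q k))"
    using q C by (intro mult_left_mono sum_mono col) (auto intro!: divide_nonneg_pos)
  also have "\<dots> = C1 * C2 * (\<Sum>k\<in>B. (x k)\<^sup>2)"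
    using q by (simp add: sum_distrib_left mult_ac less_imp_neq[symmetric])
  finally show ?thesis .
qed

lemma schur_test:
  fixes K :: "nat \<Rightarrow> nat \<Rightarrow> real"
  assumes K: "\<And>n k. K n k \<ge> 0" and p: "\<And>n. p n > 0" and q: "\<And>k. q k > 0"
    and C: "C1 \<ge> 0" "C2 \<ge> 0"
    and row: "\<And>n N. (\<Sum>k<N. K n k * q k) \<le> C1 * p n"
    and col: "\<And>k N. (\<Sum>n<N. K n k * p n) \<le> C2 * q k"
    and x: "\<And>k. x k \<ge> 0" "summable (\<lambda>k. (x k)\<^sup>2)"
  shows "\<And>n. summable (\<lambda>k. K n k * x k)"
    and "summable (\<lambda>n. (\<Sum>k. K n k * x k)\<^sup>2)"
    and "(\<Sum>n. (\<Sum>k. K n k * x k)\<^sup>2) \<le> C1 * C2 * (\<Sum>k. (x k)\<^sup>2)"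
proof -
  define B where "B = C1 * C2 * (\<Sum>k. (x k)\<^sup>2)"
  have finite_sections: "(\<Sum>n<N'. (\<Sum>k<N. K n k * x k)\<^sup>2) \<le> B" for N' N
  proof -
    have "(\<Sum>n<N'. (\<Sum>k<N. K n k * x k)\<^sup>2) \<le> C1 * C2 * (\<Sum>k<N. (x k)\<^sup>2)"
      by (rule schur_test_finite[where p = p and q = q]) (use assms in auto)
    also have "\<dots> \<le> B"
      unfolding B_def using C x by (intro mult_left_mono sum_le_suminf) auto
    finally show ?thesis .
  qed
  show inner: "summable (\<lambda>k. K n k * x k)" for n
  proof (rule summableI_nonneg_bounded)
    fix N
    have "(\<Sum>k<N. K n k * x k)\<^sup>2 \<le> (\<Sum>m<Suc n. (\<Sum>k<N. K m k * x k)\<^sup>2)"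
      by (rule member_le_sum) auto
    then show "(\<Sum>k<N. K n k * x k) \<le> sqrt B"
      using finite_sections[of N "Suc n"] by (intro real_le_rsqrt) linarith
  qed (use K x in auto)
  have partial: "(\<Sum>n<N'. (\<Sum>k. K n k * x k)\<^sup>2) \<le> B" for N'
  proof (rule LIMSEQ_le_const2)
    show "(\<lambda>N. \<Sum>n<N'. (\<Sum>k<N. K n k * x k)\<^sup>2) \<longlonglongrightarrow> (\<Sum>n<N'. (\<Sum>k. K n k * x k)\<^sup>2)"
      by (intro tendsto_intros summable_LIMSEQ inner)
  qed (use finite_sections in auto)
  show "summable (\<lambda>n. (\<Sum>k. K n k * x k)\<^sup>2)"
    by (rule summableI_nonneg_bounded[OF _ partial]) auto
  then show "(\<Sum>n. (\<Sum>k. K n k * x k)\<^sup>2) \<le> C1 * C2 * (\<Sum>k. (x k)\<^sup>2)"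
    unfolding B_def[symmetric] using partial by (rule suminf_le_const)
qed

section \<open>Measures on \<open>[0,1)\<close> and their moments\<close>

lemma borel_measure_01_space: "borel_measure_01 M \<Longrightarrow> space M = {0..<1}"
  unfolding borel_measure_01_def by (auto dest!: sets_eq_imp_space_eq simp: space_restrict_space)

lemma borel_measure_01_finite_measure: "borel_measure_01 M \<Longrightarrow> finite_measure M"
  unfolding borel_measure_01_def by auto

lemma borel_measure_01_Ico_sets:
  assumes "borel_measure_01 M" "0 \<le> t"
  shows "{t..<1} \<in> sets M"
proof -
  have "{t..<1} \<in> sets (restrict_space borel {0..<1::real})"
    using assms(2) by (subst sets_restrict_space_iff) auto
  then show ?thesis using assms(1) unfolding borel_measure_01_def by simp
qed

lemma borel_measure_01_integrable_power:
  assumes "borel_measure_01 M"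
  shows "integrable M (\<lambda>t. t ^ j)"
proof -
  interpret finite_measure M using borel_measure_01_finite_measure[OF assms] .
  have "sets M = sets (restrict_space borel {0..<1::real})"
    using assms unfolding borel_measure_01_def by simp
  then have "(\<lambda>t. t ^ j) \<in> borel_measurable M"
    by (subst measurable_cong_sets[OF _ refl]) (auto intro: measurable_restrict_space1)
  moreover have "AE t in M. norm (t ^ j) \<le> 1"
    using borel_measure_01_space[OF assms] by (intro AE_I2) (auto simp: power_abs intro!: power_le_one)
  ultimately show ?thesis by (intro integrable_const_bound)
qed

lemma moment_nonneg: "borel_measure_01 M \<Longrightarrow> moment M j \<ge> 0"
  unfolding moment_def using borel_measure_01_space by (intro Bochner_Integration.integral_nonneg) auto

lemma moment_le_measure_space:
  assumes "borel_measure_01 M"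
  shows "moment M j \<le> measure M (space M)"
proof -
  interpret finite_measure M using borel_measure_01_finite_measure[OF assms] .
  have "moment M j \<le> (LINT t|M. 1)" unfolding moment_def
    by (intro Bochner_Integration.integral_mono borel_measure_01_integrable_power[OF assms])
       (use borel_measure_01_space[OF assms] in \<open>auto simp: power_le_one\<close>)
  then show ?thesis by simp
qed

lemma borel_measure_01_integral_indicator:
  assumes "borel_measure_01 M" "0 \<le> t"
  shows "integrable M (indicator {t..<1} :: real \<Rightarrow> real)"
    and "(LINT u|M. c * indicator {t..<1} u) = c * measure M {t..<1}"
proof -
  interpret finite_measure M using borel_measure_01_finite_measure[OF assms(1)] .
  have sets: "{t..<1} \<in> sets M" using borel_measure_01_Ico_sets[OF assms] .
  then show "integrable M (indicator {t..<1} :: real \<Rightarrow> real)"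
    by (intro integrable_real_indicator) (simp_all add: less_top[symmetric])
  have "{t..<1} \<inter> space M = {t..<1}" using sets sets.sets_into_space by blast
  then show "(LINT u|M. c * indicator {t..<1} u) = c * measure M {t..<1}"
    by (simp only: integral_mult_right_zero Bochner_Integration.integral_indicator)
qed

lemma power_mult_measure_le_moment:
  assumes "borel_measure_01 M" "0 \<le> t"
  shows "t ^ j * measure M {t..<1} \<le> moment M j"
proof -
  have "(LINT u|M. t ^ j * indicator {t..<1} u) \<le> moment M j" unfolding moment_def
  proof (intro Bochner_Integration.integral_mono borel_measure_01_integrable_power[OF assms(1)])
    show "integrable M (\<lambda>u. t ^ j * indicator {t..<1} u)"
      using borel_measure_01_integral_indicator(1)[OF assms] by (rule integrable_mult_right)
    show "t ^ j * indicator {t..<1} u \<le> u ^ j" if "u \<in> space M" for u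
      using that assms(2) borel_measure_01_space[OF assms(1)]
      by (auto simp: indicator_def power_mono)
  qed
  then show ?thesis by (simp only: borel_measure_01_integral_indicator(2)[OF assms])
qed

lemma carleson_iff_bound:
  "carleson s M \<longleftrightarrow> (\<exists>K. \<forall>t\<in>{0..<1}. measure M {t..<1} \<le> K * (1 - t) powr s)"
  unfolding carleson_def bdd_above_def by (auto simp: pos_divide_le_eq)

lemma carleson_if_bound_near_one:
  assumes "borel_measure_01 M" "t\<^sub>0 < 1"
    and near_one: "\<And>t. t\<^sub>0 \<le> t \<Longrightarrow> t < 1 \<Longrightarrow> measure M {t..<1} \<le> K * (1 - t) powr s"
  shows "carleson s M"
proof -
  interpret finite_measure M using borel_measure_01_finite_measure[OF assms(1)] .
  define m where "m = min 1 ((1 - t\<^sub>0) powr s)"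
  have "m > 0" using assms(2) unfolding m_def by simp
  have m_le: "m \<le> (1 - t) powr s" if "0 \<le> t" "t < t\<^sub>0" for t
  proof (cases "s \<ge> 0")
    case True
    then have "(1 - t\<^sub>0) powr s \<le> (1 - t) powr s" using that assms(2) by (intro powr_mono2) auto
    then show ?thesis unfolding m_def by simp
  next
    case False
    then have "1 powr s \<le> (1 - t) powr s" using that assms(2) by (intro powr_mono2') auto
    then show ?thesis unfolding m_def by simp
  qed
  have "measure M {t..<1} \<le> max K (measure M (space M) / m) * (1 - t) powr s"
    if "t \<in> {0..<1}" for t
  proof (cases "t < t\<^sub>0")
    case True
    have "measure M {t..<1} * m \<le> measure M (space M) * (1 - t) powr s"
      using that True \<open>m > 0\<close> m_le bounded_measure[of "{t..<1}"] by (intro mult_mono) auto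
    then have "measure M {t..<1} \<le> measure M (space M) / m * (1 - t) powr s"
      using \<open>m > 0\<close> by (simp add: field_simps)
    also have "\<dots> \<le> max K (measure M (space M) / m) * (1 - t) powr s"
      by (intro mult_right_mono) auto
    finally show ?thesis .
  next
    case False
    then have "measure M {t..<1} \<le> K * (1 - t) powr s"
      using that near_one by simp
    also have "\<dots> \<le> max K (measure M (space M) / m) * (1 - t) powr s"
      by (intro mult_right_mono) auto
    finally show ?thesis .
  qed
  then show ?thesis unfolding carleson_iff_bound by blast
qed

section \<open>Moment decay of Carleson measures\<close>

definition dyadic_point :: "nat \<Rightarrow> real" where
  "dyadic_point j = 1 - (1 / 2) ^ j"

lemma dyadic_point_nonneg: "0 \<le> dyadic_point j"
  by (simp add: dyadic_point_def power_le_one)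

lemma dyadic_point_less_one: "dyadic_point j < 1"
  by (simp add: dyadic_point_def)

lemma one_minus_dyadic_point_powr: "(1 - dyadic_point j) powr s = 2 powr (- s * real j)"
proof -
  have "1 - dyadic_point j = 2 powr (- real j)"
    by (simp add: dyadic_point_def powr_minus_divide powr_realpow power_one_over)
  then show ?thesis by (simp add: powr_powr mult.commute)
qed

lemma power_le_dyadic_layers:
  assumes "0 \<le> u" "u < 1"
  shows "u ^ m \<le> (\<Sum>j<J. dyadic_point (Suc j) ^ m * indicator {dyadic_point j..<1} u)
                  + indicator {dyadic_point J..<1} u"
proof (induction J)
  case 0
  then show ?case using assms by (simp add: indicator_def power_le_one dyadic_point_def)
next
  case (Suc J)
  have "(\<Sum>j<J. dyadic_point (Suc j) ^ m * indicator {dyadic_point j..<1} u) \<ge> 0"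
    by (intro sum_nonneg mult_nonneg_nonneg zero_le_power dyadic_point_nonneg) auto
  moreover have "dyadic_point J \<le> dyadic_point (Suc J)"
    by (simp add: dyadic_point_def)
  moreover have "u ^ m \<le> dyadic_point (Suc J) ^ m" if "u < dyadic_point (Suc J)"
    using that assms by (intro power_mono) auto
  moreover have "u ^ m \<le> 1" using assms by (simp add: power_le_one)
  moreover have "dyadic_point (Suc J) ^ m \<ge> 0" by (simp add: dyadic_point_nonneg)
  ultimately show ?case using Suc assms by (auto simp: indicator_def)
qed

lemma moment_le_dyadic_layers:
  assumes "borel_measure_01 M"
  shows "moment M m \<le> (\<Sum>j<J. dyadic_point (Suc j) ^ m * measure M {dyadic_point j..<1})
                        + measure M {dyadic_point J..<1}"
proof -
  note integrable = borel_measure_01_integral_indicator(1)[OF assms dyadic_point_nonneg]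
  note integral = borel_measure_01_integral_indicator(2)[OF assms dyadic_point_nonneg]
  define f where "f u = (\<Sum>j<J. dyadic_point (Suc j) ^ m * indicator {dyadic_point j..<1} u)
                         + indicator {dyadic_point J..<1} u" for u :: real
  have "moment M m \<le> (LINT u|M. f u)" unfolding moment_def f_def
  proof (intro Bochner_Integration.integral_mono borel_measure_01_integrable_power[OF assms])
    show "integrable M (\<lambda>u. (\<Sum>j<J. dyadic_point (Suc j) ^ m * indicator {dyadic_point j..<1} u)
                            + indicator {dyadic_point J..<1} u)"
      using integrable by (intro Bochner_Integration.integrable_add
          Bochner_Integration.integrable_sum integrable_mult_right)
    show "u ^ m \<le> (\<Sum>j<J. dyadic_point (Suc j) ^ m * indicator {dyadic_point j..<1} u)
                   + indicator {dyadic_point J..<1} u" if "u \<in> space M" for u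
      using that borel_measure_01_space[OF assms] by (intro power_le_dyadic_layers) auto
  qed
  also have "(LINT u|M. f u)
      = (LINT u|M. (\<Sum>j<J. dyadic_point (Suc j) ^ m * indicator {dyadic_point j..<1} u))
        + (LINT u|M. indicator {dyadic_point J..<1} u)"
    unfolding f_def using integrable
    by (intro Bochner_Integration.integral_add Bochner_Integration.integrable_sum integrable_mult_right)
  also have "(LINT u|M. (\<Sum>j<J. dyadic_point (Suc j) ^ m * indicator {dyadic_point j..<1} u))
      = (\<Sum>j<J. dyadic_point (Suc j) ^ m * measure M {dyadic_point j..<1})"
    using integrable by (simp only: Bochner_Integration.integral_sum integrable_mult_right integral)
  also have "(LINT u|M. indicator {dyadic_point J..<1} u) = measure M {dyadic_point J..<1}"
    using integral[of 1] by simp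
  finally show ?thesis .
qed

lemma dyadic_point_power_le:
  assumes "2 ^ J \<le> m" "j < J"
  shows "dyadic_point (Suc j) ^ m \<le> exp (- (2 ^ (J - Suc j)))"
proof -
  have "dyadic_point (Suc j) ^ m \<le> exp (- ((1 / 2) ^ Suc j)) ^ m"
    unfolding dyadic_point_def
    using exp_ge_add_one_self[of "- ((1 / 2 :: real) ^ Suc j)"] power_le_one[of "1 / 2 :: real" j]
    by (intro power_mono) auto
  also have "\<dots> = exp (- (real m * (1 / 2) ^ Suc j))"
    by (simp add: exp_of_nat_mult[symmetric])
  also have "\<dots> \<le> exp (- (2 ^ (J - Suc j)))"
  proof -
    have "(2 :: real) ^ (J - Suc j) = 2 ^ J * (1 / 2) ^ Suc j"
      using assms(2) by (simp add: power_diff field_simps)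
    also have "\<dots> \<le> real m * (1 / 2) ^ Suc j"
      using assms(1) by (intro mult_right_mono) (auto simp flip: of_nat_le_iff)
    finally show ?thesis by simp
  qed
  finally show ?thesis .
qed

lemma summable_exp_neg_two_power:
  "summable (\<lambda>i::nat. exp (- (2 ^ i)) * 2 powr (s * (real i + 1)))"
proof (rule summable_comparison_test_ev)
  have "(\<lambda>i::nat. exp (- (2 ^ i)) * 2 powr (s * (real i + 1)) / (1 / 2) ^ i) \<longlonglongrightarrow> 0"
    by real_asymp
  then have "eventually (\<lambda>i. exp (- (2 ^ i)) * 2 powr (s * (real i + 1)) / (1 / 2) ^ i < 1) sequentially"
    by (rule order_tendstoD) simp
  then show "eventually (\<lambda>i. norm (exp (- (2 ^ i)) * 2 powr (s * (real i + 1))) \<le> (1 / 2) ^ i) sequentially"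
    by eventually_elim (simp add: field_simps)
qed (simp add: summable_geometric)

lemma moment_le_dyadic_tail:
  assumes "borel_measure_01 M" "K \<ge> 0"
    and layer: "\<And>j. measure M {dyadic_point j..<1} \<le> K * 2 powr (- s * real j)"
    and "2 ^ J \<le> m"
  shows "moment M m
           \<le> K * (1 + (\<Sum>i. exp (- (2 ^ i)) * 2 powr (s * (real i + 1)))) * 2 powr (- s * real J)"
proof -
  define g where "g i = exp (- (2 ^ i)) * 2 powr (s * (real i + 1))" for i :: nat
  have "moment M m \<le> (\<Sum>j<J. dyadic_point (Suc j) ^ m * measure M {dyadic_point j..<1})
                        + measure M {dyadic_point J..<1}"
    by (rule moment_le_dyadic_layers[OF assms(1)])
  also have "\<dots> \<le> (\<Sum>j<J. exp (- (2 ^ (J - Suc j))) * (K * 2 powr (- s * real j)))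
                   + K * 2 powr (- s * real J)"
    using assms(4) by (intro add_mono sum_mono mult_mono dyadic_point_power_le layer)
      (auto simp: dyadic_point_nonneg)
  \<comment> \<open>Counted from the top, layer \<open>J - 1 - i\<close> is damped by \<open>exp (-2\<^sup>i)\<close>.\<close>
  also have "(\<Sum>j<J. exp (- (2 ^ (J - Suc j))) * (K * 2 powr (- s * real j)))
      = (\<Sum>i<J. exp (- (2 ^ (J - Suc (J - Suc i)))) * (K * 2 powr (- s * real (J - Suc i))))"
    by (rule sum.nat_diff_reindex[symmetric])
  also have "\<dots> = K * 2 powr (- s * real J) * (\<Sum>i<J. g i)"
    unfolding sum_distrib_left
  proof (intro sum.cong refl)
    fix i assume "i \<in> {..<J}"
    then have "J - Suc (J - Suc i) = i" "- s * real (J - Suc i) = - s * real J + s * (real i + 1)"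
      by (auto simp: of_nat_diff algebra_simps)
    then show "exp (- (2 ^ (J - Suc (J - Suc i)))) * (K * 2 powr (- s * real (J - Suc i)))
        = K * 2 powr (- s * real J) * g i"
      unfolding g_def by (simp add: powr_add[symmetric] algebra_simps)
  qed
  also have "K * 2 powr (- s * real J) * (\<Sum>i<J. g i) \<le> K * 2 powr (- s * real J) * (\<Sum>i. g i)"
    using assms(2) summable_exp_neg_two_power unfolding g_def
    by (intro mult_left_mono sum_le_suminf) auto
  finally show ?thesis
    unfolding g_def by (simp add: algebra_simps)
qed

lemma carleson_imp_moment_bound:
  assumes "borel_measure_01 M" "s > 0" "carleson s M"
  obtains C where "\<And>m. moment M m \<le> C * (real m + 1) powr (- s)"
proof -
  obtain K where K: "\<And>t. t \<in> {0..<1} \<Longrightarrow> measure M {t..<1} \<le> K * (1 - t) powr s"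
    using assms(3) unfolding carleson_iff_bound by blast
  have "K \<ge> 0" using K[of 0] by (auto intro: order_trans[OF measure_nonneg])
  have layer: "measure M {dyadic_point j..<1} \<le> K * 2 powr (- s * real j)" for j
    using K[of "dyadic_point j"] dyadic_point_nonneg dyadic_point_less_one
    by (simp add: one_minus_dyadic_point_powr)
  define D where "D = (\<Sum>i. exp (- (2 ^ i)) * 2 powr (s * (real i + 1)))"
  have "D \<ge> 0" unfolding D_def by (intro suminf_nonneg summable_exp_neg_two_power) auto
  have "moment M m \<le> max (measure M (space M)) (K * (1 + D) * 2 powr s) * (real m + 1) powr (- s)" for m
  proof (cases "m = 0")
    case True
    then show ?thesis using moment_le_measure_space[OF assms(1), of 0] by simp
  next
    case False
    then obtain J where J: "2 ^ J \<le> m" "m < 2 ^ Suc J" using ex_power_ivl1[of 2 m] by auto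
    have "moment M m \<le> K * (1 + D) * 2 powr (- s * real J)"
      unfolding D_def by (rule moment_le_dyadic_tail[OF assms(1) \<open>K \<ge> 0\<close> layer J(1)])
    also have "2 powr (- s * real J) = 2 powr s * (2 powr real (Suc J)) powr (- s)"
      by (simp add: powr_powr powr_add[symmetric] algebra_simps)
    also have "2 powr real (Suc J) = (2 :: real) ^ Suc J"
      by (rule powr_realpow) simp
    also have "(2 ^ Suc J) powr (- s) \<le> (real m + 1) powr (- s)"
    proof (rule powr_mono2')
      have "m + 1 \<le> 2 ^ Suc J" using J(2) by simp
      then have "real (m + 1) \<le> real (2 ^ Suc J)" by (simp only: of_nat_le_iff)
      then show "real m + 1 \<le> 2 ^ Suc J" by simp
    qed (use assms(2) in auto)
    finally have "moment M m \<le> K * (1 + D) * 2 powr s * (real m + 1) powr (- s)"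
      using \<open>K \<ge> 0\<close> \<open>D \<ge> 0\<close> by (simp add: mult_left_mono mult.assoc)
    also have "\<dots> \<le> max (measure M (space M)) (K * (1 + D) * 2 powr s) * (real m + 1) powr (- s)"
      by (intro mult_right_mono) auto
    finally show ?thesis .
  qed
  then show thesis by (rule that)
qed

section \<open>Boundedness from moment decay\<close>

definition D_coord :: "real \<Rightarrow> (nat \<Rightarrow> complex) \<Rightarrow> nat \<Rightarrow> real" where
  "D_coord \<alpha> a k = (real k + 1) powr ((1 - \<alpha>) / 2) * cmod (a k)"

lemma D_coord_nonneg: "D_coord \<alpha> a k \<ge> 0"
  by (simp add: D_coord_def)

lemma D_coord_squared: "(D_coord \<alpha> a k)\<^sup>2 = (real k + 1) powr (1 - \<alpha>) * (cmod (a k))\<^sup>2"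
proof -
  have "((real k + 1) powr ((1 - \<alpha>) / 2))\<^sup>2 = (real k + 1) powr (1 - \<alpha>)"
    by (simp add: power2_eq_square powr_add[symmetric])
  then show ?thesis by (simp add: D_coord_def power_mult_distrib)
qed

lemma in_D_iff_summable_D_coord: "in_D \<alpha> a \<longleftrightarrow> summable (\<lambda>k. (D_coord \<alpha> a k)\<^sup>2)"
  by (simp add: in_D_def D_coord_squared)

lemma D_normsq_eq_suminf_D_coord: "D_normsq \<alpha> a = (\<Sum>k. (D_coord \<alpha> a k)\<^sup>2)"
  by (simp add: D_normsq_def D_coord_squared)

lemma D_normsq_le_if_D_coord_le:
  assumes "\<And>n. D_coord \<beta> b n \<le> y n" "summable (\<lambda>n. (y n)\<^sup>2)"
  shows "in_D \<beta> b" "D_normsq \<beta> b \<le> (\<Sum>n. (y n)\<^sup>2)"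
proof -
  have le: "(D_coord \<beta> b n)\<^sup>2 \<le> (y n)\<^sup>2" for n
    using assms(1)[of n] D_coord_nonneg[of \<beta> b n] by (intro power_mono) auto
  then have "summable (\<lambda>n. (D_coord \<beta> b n)\<^sup>2)"
    by (intro summable_comparison_test[OF _ assms(2)]) auto
  then show "in_D \<beta> b" "D_normsq \<beta> b \<le> (\<Sum>n. (y n)\<^sup>2)"
    unfolding in_D_iff_summable_D_coord D_normsq_eq_suminf_D_coord
    using le assms(2) by (auto intro: suminf_le)
qed

text \<open>Bounding \<open>\<mu>\<^sub>n\<^sub>+\<^sub>k\<close> by \<open>(n + k + 1) powr -s\<close> and the Gamma weight by
  \<open>(n + 1) powr (\<gamma> - 1)\<close>, the matrix of the operator in \<open>D_coord\<close> coordinates is dominated,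
  up to a constant factor, by \<open>hilbert_kernel \<alpha> s\<close> as soon as \<open>\<gamma> - (\<beta> - \<alpha>) / 2 \<le> s\<close>.\<close>

definition hilbert_kernel :: "real \<Rightarrow> real \<Rightarrow> nat \<Rightarrow> nat \<Rightarrow> real" where
  "hilbert_kernel a s n k =
     (real n + 1) powr (s - (1 + a) / 2) * (real n + real k + 1) powr (- s) * (real k + 1) powr ((a - 1) / 2)"

lemma hilbert_kernel_nonneg: "hilbert_kernel a s n k \<ge> 0"
  by (simp add: hilbert_kernel_def)

lemma hilbert_kernel_row_sum_le:
  assumes "0 < a" "a / 2 < s"
  obtains C where "C \<ge> 0"
    "\<And>n N. (\<Sum>k<N. hilbert_kernel a s n k * (real k + 1) powr (- 1 / 2)) \<le> C * (real n + 1) powr (- 1 / 2)"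
proof -
  obtain C1 where "C1 > 0" and C1: "\<And>n N. (\<Sum>k<N. (real k + 1) powr (a / 2 - 1) * (real n + real k + 1) powr (- s))
      \<le> C1 * (real n + 1) powr (a / 2 - s)"
    using sum_powr_convolution_le[of "a / 2" s] assms by auto
  have "(\<Sum>k<N. hilbert_kernel a s n k * (real k + 1) powr (- 1 / 2)) \<le> C1 * (real n + 1) powr (- 1 / 2)" for n N
  proof -
    have "(\<Sum>k<N. hilbert_kernel a s n k * (real k + 1) powr (- 1 / 2))
        = (real n + 1) powr (s - (1 + a) / 2)
          * (\<Sum>k<N. (real k + 1) powr (a / 2 - 1) * (real n + real k + 1) powr (- s))"
      unfolding sum_distrib_left
    proof (intro sum.cong refl)
      fix k
      have "(a - 1) / 2 + - 1 / 2 = a / 2 - 1" by (simp add: field_simps)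
      then have "(real k + 1) powr ((a - 1) / 2) * (real k + 1) powr (- 1 / 2) = (real k + 1) powr (a / 2 - 1)"
        by (simp only: powr_add[symmetric])
      moreover have "hilbert_kernel a s n k * (real k + 1) powr (- 1 / 2)
          = (real n + 1) powr (s - (1 + a) / 2) * (real n + real k + 1) powr - s
            * ((real k + 1) powr ((a - 1) / 2) * (real k + 1) powr (- 1 / 2))"
        unfolding hilbert_kernel_def by (simp only: mult.assoc)
      ultimately show "hilbert_kernel a s n k * (real k + 1) powr (- 1 / 2)
          = (real n + 1) powr (s - (1 + a) / 2) * ((real k + 1) powr (a / 2 - 1) * (real n + real k + 1) powr - s)"
        by (simp add: mult_ac)
    qed
    also have "\<dots> \<le> (real n + 1) powr (s - (1 + a) / 2) * (C1 * (real n + 1) powr (a / 2 - s))"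
      by (intro mult_left_mono C1) auto
    also have "\<dots> = C1 * (real n + 1) powr (- 1 / 2)"
      by (simp add: mult.left_commute powr_add[symmetric] field_simps)
    finally show ?thesis .
  qed
  then show thesis using \<open>C1 > 0\<close> by (intro that[of C1]) auto
qed

lemma hilbert_kernel_column_sum_le:
  assumes "0 < a" "a / 2 < s"
  obtains C where "C \<ge> 0"
    "\<And>k N. (\<Sum>n<N. hilbert_kernel a s n k * (real n + 1) powr (- 1 / 2)) \<le> C * (real k + 1) powr (- 1 / 2)"
proof -
  obtain C2 where "C2 > 0" and C2: "\<And>k N. (\<Sum>n<N. (real n + 1) powr ((s - a / 2) - 1) * (real k + real n + 1) powr (- s))
      \<le> C2 * (real k + 1) powr ((s - a / 2) - s)"
    using sum_powr_convolution_le[of "s - a / 2" s] assms by auto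
  have "(\<Sum>n<N. hilbert_kernel a s n k * (real n + 1) powr (- 1 / 2)) \<le> C2 * (real k + 1) powr (- 1 / 2)" for k N
  proof -
      have "(\<Sum>n<N. hilbert_kernel a s n k * (real n + 1) powr (- 1 / 2))
        = (real k + 1) powr ((a - 1) / 2)
          * (\<Sum>n<N. (real n + 1) powr ((s - a / 2) - 1) * (real k + real n + 1) powr (- s))"
      unfolding sum_distrib_left
    proof (intro sum.cong refl)
      fix n
      have "(s - (1 + a) / 2) + - 1 / 2 = (s - a / 2) - 1" by (simp add: field_simps)
      then have "(real n + 1) powr (s - (1 + a) / 2) * (real n + 1) powr (- 1 / 2) = (real n + 1) powr ((s - a / 2) - 1)"
        by (simp only: powr_add[symmetric])
      moreover have "hilbert_kernel a s n k * (real n + 1) powr (- 1 / 2)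
          = (real k + 1) powr ((a - 1) / 2) * (real n + real k + 1) powr - s
            * ((real n + 1) powr (s - (1 + a) / 2) * (real n + 1) powr (- 1 / 2))"
        unfolding hilbert_kernel_def by (simp only: mult_ac)
      ultimately show "hilbert_kernel a s n k * (real n + 1) powr (- 1 / 2)
          = (real k + 1) powr ((a - 1) / 2) * ((real n + 1) powr ((s - a / 2) - 1) * (real k + real n + 1) powr - s)"
        by (simp add: mult_ac add_ac)
    qed
    also have "\<dots> \<le> (real k + 1) powr ((a - 1) / 2) * (C2 * (real k + 1) powr ((s - a / 2) - s))"
      by (intro mult_left_mono C2) auto
    also have "\<dots> = C2 * (real k + 1) powr (- 1 / 2)"
      by (simp add: mult.left_commute powr_add[symmetric] field_simps)
    finally show ?thesis .
  qed
  then show thesis using \<open>C2 > 0\<close> by (intro that[of C2]) auto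
qed

lemma norm_moment_mult_le_hilbert_kernel:
  assumes "borel_measure_01 M" "\<And>m. moment M m \<le> Cm * (real m + 1) powr (- s)"
  shows "norm (complex_of_real (moment M (n + k)) * a k)
           \<le> Cm * (real n + 1) powr ((1 + \<alpha>) / 2 - s) * (hilbert_kernel \<alpha> s n k * D_coord \<alpha> a k)"
proof -
  have "norm (complex_of_real (moment M (n + k)) * a k) = moment M (n + k) * cmod (a k)"
    using moment_nonneg[OF assms(1)] by (simp add: norm_mult)
  also have "\<dots> \<le> Cm * (real n + real k + 1) powr (- s) * cmod (a k)"
    using assms(2)[of "n + k"] by (intro mult_right_mono) (auto simp: add_ac)
  also have "\<dots> = Cm * (real n + real k + 1) powr (- s) * cmod (a k)
                    * ((real n + 1) powr ((1 + \<alpha>) / 2 - s) * (real n + 1) powr (s - (1 + \<alpha>) / 2))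
                    * ((real k + 1) powr ((\<alpha> - 1) / 2) * (real k + 1) powr ((1 - \<alpha>) / 2))"
  proof -
    have "(\<alpha> - 1) / 2 + (1 - \<alpha>) / 2 = 0" by (simp add: field_simps)
    then show ?thesis by (simp add: powr_add[symmetric])
  qed
  also have "\<dots> = Cm * (real n + 1) powr ((1 + \<alpha>) / 2 - s) * (hilbert_kernel \<alpha> s n k * D_coord \<alpha> a k)"
    unfolding hilbert_kernel_def D_coord_def by (simp only: mult_ac)
  finally show ?thesis .
qed

lemma moment_series_bound:
  assumes "borel_measure_01 M" "\<And>m. moment M m \<le> Cm * (real m + 1) powr (- s)"
    and summable: "summable (\<lambda>k. hilbert_kernel \<alpha> s n k * D_coord \<alpha> a k)"
  shows "summable (\<lambda>k. complex_of_real (moment M (n + k)) * a k)"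
    and "cmod (\<Sum>k. complex_of_real (moment M (n + k)) * a k)
           \<le> Cm * (real n + 1) powr ((1 + \<alpha>) / 2 - s) * (\<Sum>k. hilbert_kernel \<alpha> s n k * D_coord \<alpha> a k)"
proof -
  define P where "P = (real n + 1) powr ((1 + \<alpha>) / 2 - s)"
  note term_le = norm_moment_mult_le_hilbert_kernel[OF assms(1,2), where n = n and \<alpha> = \<alpha> and a = a, folded P_def]
  have majorant: "summable (\<lambda>k. Cm * P * (hilbert_kernel \<alpha> s n k * D_coord \<alpha> a k))"
    using summable by (rule summable_mult)
  show "summable (\<lambda>k. complex_of_real (moment M (n + k)) * a k)"
    by (rule summable_norm_cancel, rule summable_comparison_test[OF _ majorant]) (use term_le in auto)
  have "cmod (\<Sum>k. complex_of_real (moment M (n + k)) * a k)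
      \<le> (\<Sum>k. Cm * P * (hilbert_kernel \<alpha> s n k * D_coord \<alpha> a k))"
    by (rule norm_suminf_le[OF term_le majorant])
  also have "\<dots> = Cm * P * (\<Sum>k. hilbert_kernel \<alpha> s n k * D_coord \<alpha> a k)"
    using summable by (rule suminf_mult)
  finally show "cmod (\<Sum>k. complex_of_real (moment M (n + k)) * a k)
      \<le> Cm * P * (\<Sum>k. hilbert_kernel \<alpha> s n k * D_coord \<alpha> a k)" .
qed

lemma D_coord_Hilbert_op_le:
  assumes "borel_measure_01 M" "\<gamma> > 0" "\<gamma> - (\<beta> - \<alpha>) / 2 \<le> s"
    and mom: "\<And>m. moment M m \<le> Cm * (real m + 1) powr (- s)"
    and weight: "\<And>n. gamma_weight \<gamma> n \<le> Cw * (real n + 1) powr (\<gamma> - 1)"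
    and summable: "summable (\<lambda>k. hilbert_kernel \<alpha> s n k * D_coord \<alpha> a k)"
  shows "D_coord \<beta> (Hilbert_op M \<gamma> a) n \<le> Cw * Cm * (\<Sum>k. hilbert_kernel \<alpha> s n k * D_coord \<alpha> a k)"
proof -
  define P where "P = (real n + 1) powr ((1 + \<alpha>) / 2 - s)"
  define y where "y = (\<Sum>k. hilbert_kernel \<alpha> s n k * D_coord \<alpha> a k)"
  have "Cw \<ge> 0"
    using weight[of 0] gamma_weight_pos[OF assms(2), of 0] by simp
  have exponents: "(1 - \<beta>) / 2 + (\<gamma> - 1) + ((1 + \<alpha>) / 2 - s) = \<gamma> - (\<beta> - \<alpha>) / 2 - s"
    by (simp add: field_simps)
  have "(real n + 1) powr ((1 - \<beta>) / 2) * (Cw * (real n + 1) powr (\<gamma> - 1)) * P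
      = Cw * (real n + 1) powr (\<gamma> - (\<beta> - \<alpha>) / 2 - s)"
    unfolding P_def exponents[symmetric] powr_add by (simp only: mult_ac)
  also have "\<dots> \<le> Cw * 1"
    using assms(3) \<open>Cw \<ge> 0\<close> powr_mono[of "\<gamma> - (\<beta> - \<alpha>) / 2 - s" 0 "real n + 1"]
    by (intro mult_left_mono) auto
  finally have exponent: "(real n + 1) powr ((1 - \<beta>) / 2) * (Cw * (real n + 1) powr (\<gamma> - 1)) * P \<le> Cw"
    by simp
  have "D_coord \<beta> (Hilbert_op M \<gamma> a) n
      = (real n + 1) powr ((1 - \<beta>) / 2) * gamma_weight \<gamma> n
        * cmod (\<Sum>k. complex_of_real (moment M (n + k)) * a k)"
    unfolding D_coord_def Hilbert_op_def gamma_weight_def[symmetric]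
    using gamma_weight_pos[OF assms(2), of n] by (simp add: norm_mult)
  also have "\<dots> \<le> (real n + 1) powr ((1 - \<beta>) / 2) * (Cw * (real n + 1) powr (\<gamma> - 1)) * (Cm * P * y)"
    using \<open>Cw \<ge> 0\<close> gamma_weight_pos[OF assms(2), of n]
      moment_series_bound(2)[OF assms(1) mom summable, folded P_def y_def]
    by (intro mult_mono weight mult_nonneg_nonneg) auto
  also have "\<dots> = (real n + 1) powr ((1 - \<beta>) / 2) * (Cw * (real n + 1) powr (\<gamma> - 1)) * P * (Cm * y)"
    by (simp only: mult_ac)
  also have "\<dots> \<le> Cw * (Cm * y)"
    using mom[of 0] moment_nonneg[OF assms(1), of 0]
      suminf_nonneg[OF summable mult_nonneg_nonneg[OF hilbert_kernel_nonneg D_coord_nonneg]]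
    unfolding y_def by (intro mult_right_mono exponent) auto
  finally show ?thesis unfolding y_def by (simp only: mult.assoc)
qed

lemma moment_bound_imp_Hilbert_bounded:
  assumes "borel_measure_01 M" "0 < \<alpha>" "0 < \<gamma>" "\<alpha> / 2 < s" "\<gamma> - (\<beta> - \<alpha>) / 2 \<le> s"
    and mom: "\<And>m. moment M m \<le> Cm * (real m + 1) powr (- s)"
  shows "Hilbert_bounded M \<gamma> \<alpha> \<beta>"
proof -
  obtain c Cw where "c > 0" "\<And>n. c * (real n + 1) powr (\<gamma> - 1) \<le> gamma_weight \<gamma> n"
    and weight: "\<And>n. gamma_weight \<gamma> n \<le> Cw * (real n + 1) powr (\<gamma> - 1)"
    using gamma_weight_bounds[OF assms(3)] by blast
  obtain C1 where "C1 \<ge> 0"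
    and row: "\<And>n N. (\<Sum>k<N. hilbert_kernel \<alpha> s n k * (real k + 1) powr (- 1 / 2)) \<le> C1 * (real n + 1) powr (- 1 / 2)"
    using hilbert_kernel_row_sum_le[OF assms(2,4)] by blast
  obtain C2 where "C2 \<ge> 0"
    and col: "\<And>k N. (\<Sum>n<N. hilbert_kernel \<alpha> s n k * (real n + 1) powr (- 1 / 2)) \<le> C2 * (real k + 1) powr (- 1 / 2)"
    using hilbert_kernel_column_sum_le[OF assms(2,4)] by blast
  have schur_weight_pos: "\<And>n. (real n + 1) powr (- 1 / 2) > 0" by simp
  define B where "B = (Cw * Cm)\<^sup>2 * (C1 * C2)"
  have "(\<forall>n. summable (\<lambda>k. complex_of_real (moment M (n + k)) * a k)) \<and> in_D \<beta> (Hilbert_op M \<gamma> a)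
        \<and> D_norm \<beta> (Hilbert_op M \<gamma> a) \<le> sqrt B * D_norm \<alpha> a"
    if "in_D \<alpha> a" for a
  proof -
    define y where "y n = (\<Sum>k. hilbert_kernel \<alpha> s n k * D_coord \<alpha> a k)" for n
    note schur = schur_test[where K = "hilbert_kernel \<alpha> s" and x = "D_coord \<alpha> a",
        OF hilbert_kernel_nonneg schur_weight_pos schur_weight_pos \<open>C1 \<ge> 0\<close> \<open>C2 \<ge> 0\<close> row col
           D_coord_nonneg that[unfolded in_D_iff_summable_D_coord]]
    note coeff = D_coord_Hilbert_op_le[OF assms(1,3,5) mom weight schur(1), folded y_def]
    note series = moment_series_bound(1)[OF assms(1) mom schur(1)]
    have "summable (\<lambda>n. (Cw * Cm * y n)\<^sup>2)"
      unfolding power_mult_distrib y_def by (intro summable_mult schur(2))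
    with coeff have "in_D \<beta> (Hilbert_op M \<gamma> a)"
      and "D_normsq \<beta> (Hilbert_op M \<gamma> a) \<le> (\<Sum>n. (Cw * Cm * y n)\<^sup>2)"
      by (rule D_normsq_le_if_D_coord_le)+
    note this(2)
    also have "(\<Sum>n. (Cw * Cm * y n)\<^sup>2) = (Cw * Cm)\<^sup>2 * (\<Sum>n. (y n)\<^sup>2)"
      unfolding power_mult_distrib y_def by (intro suminf_mult schur(2))
    also have "\<dots> \<le> (Cw * Cm)\<^sup>2 * (C1 * C2 * D_normsq \<alpha> a)"
      unfolding y_def D_normsq_eq_suminf_D_coord by (intro mult_left_mono schur(3)) auto
    finally have "D_norm \<beta> (Hilbert_op M \<gamma> a) \<le> sqrt (B * D_normsq \<alpha> a)"
      unfolding D_norm_def B_def by (simp add: mult.assoc)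
    then show ?thesis
      using series \<open>in_D \<beta> (Hilbert_op M \<gamma> a)\<close> unfolding D_norm_def by (simp add: real_sqrt_mult)
  qed
  then show ?thesis unfolding Hilbert_bounded_def by blast
qed

section \<open>The Carleson condition from boundedness\<close>

lemma power_ge_half:
  fixes t :: real
  assumes "0 \<le> t" "t \<le> 1" "real j * (1 - t) \<le> 1 / 2"
  shows "t ^ j \<ge> 1 / 2"
  using Bernoulli_inequality[of "t - 1" j] assms by (simp add: algebra_simps)

lemma D_normsq_indicator_block_le:
  assumes "0 \<le> \<alpha>"
  shows "in_D \<alpha> (indicator {N..2 * N})"
    and "D_normsq \<alpha> (indicator {N..2 * N}) \<le> 2 * (real N + 1) powr (2 - \<alpha>)"
proof -
  define P where "P = real N + 1"
  show "in_D \<alpha> (indicator {N..2 * N})"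
    unfolding in_D_def by (rule summable_finite[of "{N..2 * N}"]) auto
  have "D_normsq \<alpha> (indicator {N..2 * N}) = (\<Sum>k\<in>{N..2 * N}. (real k + 1) powr (1 - \<alpha>))"
    unfolding D_normsq_def by (subst suminf_finite[of "{N..2 * N}"]) auto
  also have "\<dots> \<le> (\<Sum>k\<in>{N..2 * N}. 2 * P powr (1 - \<alpha>))"
  proof (rule sum_mono)
    fix k assume k: "k \<in> {N..2 * N}"
    show "(real k + 1) powr (1 - \<alpha>) \<le> 2 * P powr (1 - \<alpha>)"
    proof (cases "\<alpha> \<ge> 1")
      case True
      then have "(real k + 1) powr (1 - \<alpha>) \<le> P powr (1 - \<alpha>)"
        using k unfolding P_def by (intro powr_mono2') auto
      then show ?thesis using powr_ge_zero[of P "1 - \<alpha>"] by linarith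
    next
      case False
      then have "(real k + 1) powr (1 - \<alpha>) \<le> (2 * P) powr (1 - \<alpha>)"
        using k unfolding P_def by (intro powr_mono2) auto
      also have "\<dots> = 2 powr (1 - \<alpha>) * P powr (1 - \<alpha>)"
        by (rule powr_mult)
      also have "\<dots> \<le> 2 powr 1 * P powr (1 - \<alpha>)"
        using assms by (intro mult_right_mono powr_mono) auto
      finally show ?thesis by simp
    qed
  qed
  also have "\<dots> = 2 * P powr (2 - \<alpha>)"
    unfolding P_def by (simp add: powr_diff field_simps power2_eq_square)
  finally show "D_normsq \<alpha> (indicator {N..2 * N}) \<le> 2 * (real N + 1) powr (2 - \<alpha>)"
    unfolding P_def .
qed

lemma norm_Hilbert_op_indicator:
  assumes "borel_measure_01 M" "\<gamma> > 0" "finite I"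
  shows "cmod (Hilbert_op M \<gamma> (indicator I) n) = gamma_weight \<gamma> n * (\<Sum>k\<in>I. moment M (n + k))"
proof -
  have "(\<Sum>k. complex_of_real (moment M (n + k)) * indicator I k) = of_real (\<Sum>k\<in>I. moment M (n + k))"
    by (subst suminf_finite[OF assms(3)]) auto
  then have "Hilbert_op M \<gamma> (indicator I) n = of_real (gamma_weight \<gamma> n * (\<Sum>k\<in>I. moment M (n + k)))"
    unfolding Hilbert_op_def gamma_weight_def by (simp add: mult.commute)
  then show ?thesis
    using gamma_weight_pos[OF assms(2), of n] moment_nonneg[OF assms(1)]
    by (simp only: norm_of_real) (auto intro!: abs_of_nonneg mult_nonneg_nonneg sum_nonneg)
qed

lemma D_coord_Hilbert_op_block_ge:
  assumes "borel_measure_01 M" "1 \<le> \<beta>" "1 \<le> \<gamma>" "c > 0"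
    and weight: "\<And>n. c * (real n + 1) powr (\<gamma> - 1) \<le> gamma_weight \<gamma> n"
    and "m \<ge> 0" and moment_ge: "\<And>j. j \<le> 4 * N \<Longrightarrow> m \<le> moment M j"
    and n: "n \<in> {N..2 * N}"
  shows "2 powr (1 - \<beta>) * c\<^sup>2 * m\<^sup>2 * (real N + 1) powr (1 + 2 * \<gamma> - \<beta>)
           \<le> (D_coord \<beta> (Hilbert_op M \<gamma> (indicator {N..2 * N})) n)\<^sup>2"
proof -
  define P where "P = real N + 1"
  define I where "I = {N..2 * N}"
  have "P > 0" unfolding P_def by simp
  have "c * P powr (\<gamma> - 1) \<le> c * (real n + 1) powr (\<gamma> - 1)"
    using n assms(3,4) unfolding P_def by (intro mult_left_mono powr_mono2) auto
  then have "c * P powr (\<gamma> - 1) * (P * m) \<le> gamma_weight \<gamma> n * (\<Sum>k\<in>I. moment M (n + k))"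
    using n weight[of n] moment_ge sum_mono[of I "\<lambda>_. m" "\<lambda>k. moment M (n + k)"]
      gamma_weight_pos[of \<gamma> n] assms(3) \<open>P > 0\<close> \<open>m \<ge> 0\<close>
    unfolding I_def P_def by (intro mult_mono) (auto simp: add.commute)
  moreover have "c * P powr (\<gamma> - 1) * (P * m) = c * m * P powr \<gamma>"
    using \<open>P > 0\<close> by (simp add: powr_diff)
  ultimately have "c * m * P powr \<gamma> \<le> cmod (Hilbert_op M \<gamma> (indicator I) n)"
    using norm_Hilbert_op_indicator[OF assms(1) _ finite_atLeastAtMost, of \<gamma> N "2 * N"] assms(3)
    unfolding I_def by simp
  moreover have "(2 * P) powr (1 - \<beta>) \<le> (real n + 1) powr (1 - \<beta>)"
    using n assms(2) unfolding P_def by (intro powr_mono2') auto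
  ultimately have "(2 * P) powr (1 - \<beta>) * (c * m * P powr \<gamma>)\<^sup>2
      \<le> (real n + 1) powr (1 - \<beta>) * (cmod (Hilbert_op M \<gamma> (indicator I) n))\<^sup>2"
    using assms(4) \<open>m \<ge> 0\<close> by (intro mult_mono power_mono) auto
  moreover have "(2 * P) powr (1 - \<beta>) * (c * m * P powr \<gamma>)\<^sup>2
      = 2 powr (1 - \<beta>) * c\<^sup>2 * m\<^sup>2 * (P powr (1 - \<beta>) * P powr \<gamma> * P powr \<gamma>)"
    by (simp add: powr_mult power2_eq_square mult_ac)
  moreover have "P powr (1 - \<beta>) * P powr \<gamma> * P powr \<gamma> = P powr (1 + 2 * \<gamma> - \<beta>)"
    by (simp add: powr_add[symmetric] algebra_simps)
  ultimately show ?thesis unfolding P_def I_def by (simp add: D_coord_squared)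
qed

lemma D_normsq_Hilbert_op_block_ge:
  assumes "borel_measure_01 M" "1 \<le> \<beta>" "1 \<le> \<gamma>" "c > 0"
    and weight: "\<And>n. c * (real n + 1) powr (\<gamma> - 1) \<le> gamma_weight \<gamma> n"
    and "m \<ge> 0" "\<And>j. j \<le> 4 * N \<Longrightarrow> m \<le> moment M j"
    and "in_D \<beta> (Hilbert_op M \<gamma> (indicator {N..2 * N}))"
  shows "2 powr (1 - \<beta>) * c\<^sup>2 * m\<^sup>2 * (real N + 1) powr (2 + 2 * \<gamma> - \<beta>)
           \<le> D_normsq \<beta> (Hilbert_op M \<gamma> (indicator {N..2 * N}))"
proof -
  define P where "P = real N + 1"
  define I where "I = {N..2 * N}"
  have "2 + 2 * \<gamma> - \<beta> = 1 + (1 + 2 * \<gamma> - \<beta>)" by simp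
  then have "P powr (2 + 2 * \<gamma> - \<beta>) = P powr 1 * P powr (1 + 2 * \<gamma> - \<beta>)"
    by (simp only: powr_add)
  moreover have "real (card I) = P" unfolding I_def P_def by simp
  ultimately have "2 powr (1 - \<beta>) * c\<^sup>2 * m\<^sup>2 * P powr (2 + 2 * \<gamma> - \<beta>)
      = (\<Sum>n\<in>I. 2 powr (1 - \<beta>) * c\<^sup>2 * m\<^sup>2 * P powr (1 + 2 * \<gamma> - \<beta>))"
    unfolding P_def by simp
  also have "\<dots> \<le> (\<Sum>n\<in>I. (D_coord \<beta> (Hilbert_op M \<gamma> (indicator I)) n)\<^sup>2)"
    unfolding P_def I_def by (intro sum_mono D_coord_Hilbert_op_block_ge[OF assms(1-7)])
  also have "\<dots> \<le> D_normsq \<beta> (Hilbert_op M \<gamma> (indicator I))"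
    using assms(8) unfolding D_normsq_eq_suminf_D_coord in_D_iff_summable_D_coord I_def
    by (intro sum_le_suminf) auto
  finally show ?thesis unfolding P_def I_def .
qed

lemma D_normsq_nonneg: "in_D \<alpha> a \<Longrightarrow> D_normsq \<alpha> a \<ge> 0"
  unfolding in_D_iff_summable_D_coord D_normsq_eq_suminf_D_coord by (intro suminf_nonneg) auto

lemma Hilbert_bounded_D_normsq_le:
  assumes "Hilbert_bounded M \<gamma> \<alpha> \<beta>"
  obtains C where "C \<ge> 0" "\<And>a. in_D \<alpha> a \<Longrightarrow>
    in_D \<beta> (Hilbert_op M \<gamma> a) \<and> D_normsq \<beta> (Hilbert_op M \<gamma> a) \<le> C * D_normsq \<alpha> a"
proof -
  obtain C where C: "\<And>a. in_D \<alpha> a \<Longrightarrow>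
      in_D \<beta> (Hilbert_op M \<gamma> a) \<and> D_norm \<beta> (Hilbert_op M \<gamma> a) \<le> C * D_norm \<alpha> a"
    using assms unfolding Hilbert_bounded_def by blast
  have "D_normsq \<beta> (Hilbert_op M \<gamma> a) \<le> C\<^sup>2 * D_normsq \<alpha> a" if "in_D \<alpha> a" for a
  proof -
    have "(D_norm \<beta> (Hilbert_op M \<gamma> a))\<^sup>2 \<le> (C * D_norm \<alpha> a)\<^sup>2"
      using C[OF that] D_normsq_nonneg[of \<beta> "Hilbert_op M \<gamma> a"]
    by (intro power_mono) (auto simp: D_norm_def)
    then show ?thesis
      using C[OF that] D_normsq_nonneg[OF that] D_normsq_nonneg[of \<beta> "Hilbert_op M \<gamma> a"]
      by (simp add: D_norm_def power_mult_distrib)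
  qed
  then show thesis using C by (intro that[of "C\<^sup>2"]) auto
qed

lemma abs_le_of_square_powr_bound:
  fixes x P c C a b :: real
  assumes "c > 0" "P > 0" "c * x\<^sup>2 * P powr a \<le> C * P powr b"
  shows "\<bar>x\<bar> \<le> sqrt (C / c) * P powr ((b - a) / 2)"
proof -
  have x2: "x\<^sup>2 \<le> C / c * P powr (b - a)"
    using assms by (simp add: powr_diff field_simps)
  then have "0 \<le> C / c * P powr (b - a)"
    using zero_le_power2[of x] by linarith
  then have "C / c \<ge> 0"
    using assms(2) powr_gt_zero[of P "b - a"] unfolding zero_le_mult_iff by (meson not_le less_irrefl)
  have "(P powr ((b - a) / 2))\<^sup>2 = P powr (b - a)"
    by (simp only: power2_eq_square powr_add[symmetric] field_sum_of_halves)
  then have "C / c * P powr (b - a) = (sqrt (C / c) * P powr ((b - a) / 2))\<^sup>2"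
    using \<open>C / c \<ge> 0\<close> by (simp add: power_mult_distrib)
  then have "\<bar>x\<bar>\<^sup>2 \<le> (sqrt (C / c) * P powr ((b - a) / 2))\<^sup>2"
    using x2 by simp
  then show ?thesis
    by (rule power2_le_imp_le) (use \<open>C / c \<ge> 0\<close> in simp)
qed

lemma powr_neg_le_of_between:
  fixes P X s :: real
  assumes "0 < X" "X \<le> P" "P \<le> 2 * X"
  shows "P powr (- s) \<le> 2 powr \<bar>s\<bar> * X powr (- s)"
proof (cases "s \<ge> 0")
  case True
  then have "P powr (- s) \<le> X powr (- s)" using assms by (intro powr_mono2') auto
  also have "\<dots> \<le> 2 powr \<bar>s\<bar> * X powr (- s)"
    using mult_right_mono[OF ge_one_powr_ge_zero[of 2 "\<bar>s\<bar>"] powr_ge_zero[of X "- s"]] by simp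
  finally show ?thesis .
next
  case False
  then have "P powr (- s) \<le> (2 * X) powr (- s)" using assms by (intro powr_mono2) auto
  also have "\<dots> = 2 powr \<bar>s\<bar> * X powr (- s)" using False assms by (simp add: powr_mult)
  finally show ?thesis .
qed

lemma measure_Ico_le_of_block_test:
  assumes "borel_measure_01 M" "0 \<le> \<alpha>" "1 \<le> \<beta>" "1 \<le> \<gamma>" "c > 0"
    and weight: "\<And>n. c * (real n + 1) powr (\<gamma> - 1) \<le> gamma_weight \<gamma> n"
    and "C \<ge> 0" and bounded: "\<And>a. in_D \<alpha> a \<Longrightarrow>
      in_D \<beta> (Hilbert_op M \<gamma> a) \<and> D_normsq \<beta> (Hilbert_op M \<gamma> a) \<le> C * D_normsq \<alpha> a"
    and t: "0 \<le> t" "t < 1" "real (4 * N) * (1 - t) \<le> 1 / 2"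
  shows "measure M {t..<1}
           \<le> sqrt (8 * C / (2 powr (1 - \<beta>) * c\<^sup>2)) * (real N + 1) powr (- (\<gamma> - (\<beta> - \<alpha>) / 2))"
proof -
  define \<mu> where "\<mu> = measure M {t..<1}"
  define P where "P = real N + 1"
  define c' where "c' = 2 powr (1 - \<beta>) * c\<^sup>2 / 4"
  have "c' > 0" unfolding c'_def using \<open>c > 0\<close> by simp
  have moment_ge: "\<mu> / 2 \<le> moment M j" if "j \<le> 4 * N" for j
  proof -
    have "real j * (1 - t) \<le> real (4 * N) * (1 - t)"
      using that t by (intro mult_right_mono) auto
    then have "real j * (1 - t) \<le> 1 / 2"
      using t(3) by linarith
    then have "1 / 2 * \<mu> \<le> t ^ j * \<mu>"
      using t power_ge_half[of t j] unfolding \<mu>_def by (intro mult_right_mono) auto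
    also have "\<dots> \<le> moment M j"
      unfolding \<mu>_def using t by (intro power_mult_measure_le_moment[OF assms(1)]) auto
    finally show ?thesis by simp
  qed
  note block = D_normsq_indicator_block_le[OF assms(2), of N]
  have "c' * \<mu>\<^sup>2 * P powr (2 + 2 * \<gamma> - \<beta>)
      = 2 powr (1 - \<beta>) * c\<^sup>2 * (\<mu> / 2)\<^sup>2 * P powr (2 + 2 * \<gamma> - \<beta>)"
    unfolding c'_def by (simp add: power_divide)
  also have "\<dots> \<le> D_normsq \<beta> (Hilbert_op M \<gamma> (indicator {N..2 * N}))"
    unfolding P_def using moment_ge
    using conjunct1[OF bounded[OF block(1)]]
    by (intro D_normsq_Hilbert_op_block_ge[OF assms(1,3,4,5) weight]) (auto simp: \<mu>_def)
  also have "\<dots> \<le> C * (2 * P powr (2 - \<alpha>))"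
    using bounded[OF block(1)] block(2) \<open>C \<ge> 0\<close> unfolding P_def
    by (meson mult_left_mono order_trans)
  finally have "\<bar>\<mu>\<bar> \<le> sqrt (2 * C / c') * P powr (((2 - \<alpha>) - (2 + 2 * \<gamma> - \<beta>)) / 2)"
    using \<open>c' > 0\<close> unfolding P_def by (intro abs_le_of_square_powr_bound) (auto simp: mult.assoc)
  also have "((2 - \<alpha>) - (2 + 2 * \<gamma> - \<beta>)) / 2 = - (\<gamma> - (\<beta> - \<alpha>) / 2)"
    by (simp add: field_simps)
  also have "2 * C / c' = 8 * C / (2 powr (1 - \<beta>) * c\<^sup>2)"
    unfolding c'_def by simp
  finally show ?thesis unfolding \<mu>_def P_def by simp
qed

lemma Hilbert_bounded_imp_tail_bound:
  assumes "borel_measure_01 M" "0 \<le> \<alpha>" "1 \<le> \<beta>" "1 \<le> \<gamma>" "Hilbert_bounded M \<gamma> \<alpha> \<beta>"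
  obtains K where
    "\<And>t. 7 / 8 \<le> t \<Longrightarrow> t < 1 \<Longrightarrow> measure M {t..<1} \<le> K * (1 - t) powr (\<gamma> - (\<beta> - \<alpha>) / 2)"
proof -
  define s where "s = \<gamma> - (\<beta> - \<alpha>) / 2"
  obtain C where "C \<ge> 0" and C: "\<And>a. in_D \<alpha> a \<Longrightarrow>
      in_D \<beta> (Hilbert_op M \<gamma> a) \<and> D_normsq \<beta> (Hilbert_op M \<gamma> a) \<le> C * D_normsq \<alpha> a"
    using Hilbert_bounded_D_normsq_le[OF assms(5)] by blast
  obtain c where "c > 0" and weight: "\<And>n. c * (real n + 1) powr (\<gamma> - 1) \<le> gamma_weight \<gamma> n"
    using gamma_weight_bounds[of \<gamma>] assms(4) by (metis less_le_trans zero_less_one)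
  define B where "B = sqrt (8 * C / (2 powr (1 - \<beta>) * c\<^sup>2))"
  have "B \<ge> 0" unfolding B_def using \<open>C \<ge> 0\<close> by simp
  have "measure M {t..<1} \<le> B * 2 powr \<bar>s\<bar> * 8 powr s * (1 - t) powr s"
    if t: "7 / 8 \<le> t" "t < 1" for t
  proof -
    define X where "X = 1 / (8 * (1 - t))"
    define N where "N = nat \<lfloor>X\<rfloor>"
    have "X \<ge> 1" unfolding X_def using t by (simp add: field_simps)
    then have N: "real N \<le> X" "X \<le> real N + 1" "real N + 1 \<le> 2 * X"
      unfolding N_def by linarith+
    have "real (4 * N) * (1 - t) \<le> 4 * X * (1 - t)"
      using N t by (intro mult_right_mono) auto
    also have "\<dots> = 1 / 2" unfolding X_def using t by simp
    finally have "measure M {t..<1} \<le> B * (real N + 1) powr (- s)"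
      unfolding B_def s_def using t
      by (intro measure_Ico_le_of_block_test[OF assms(1-4) \<open>c > 0\<close> weight \<open>C \<ge> 0\<close> C]) auto
    also have "\<dots> \<le> B * (2 powr \<bar>s\<bar> * X powr (- s))"
      using N \<open>X \<ge> 1\<close> \<open>B \<ge> 0\<close> by (intro mult_left_mono powr_neg_le_of_between) auto
    also have "X powr (- s) = (8 * (1 - t)) powr s"
      unfolding X_def using t by (simp add: powr_minus_divide powr_divide)
    also have "\<dots> = 8 powr s * (1 - t) powr s"
      by (rule powr_mult)
    finally show ?thesis by (simp add: mult.assoc)
  qed
  then show thesis unfolding s_def by (rule that)
qed

lemma Hilbert_bounded_imp_carleson:
  assumes "borel_measure_01 M" "0 \<le> \<alpha>" "1 \<le> \<beta>" "1 \<le> \<gamma>" "Hilbert_bounded M \<gamma> \<alpha> \<beta>"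
  shows "carleson (\<gamma> - (\<beta> - \<alpha>) / 2) M"
proof -
  obtain K where near_one:
    "\<And>t. 7 / 8 \<le> t \<Longrightarrow> t < 1 \<Longrightarrow> measure M {t..<1} \<le> K * (1 - t) powr (\<gamma> - (\<beta> - \<alpha>) / 2)"
    using Hilbert_bounded_imp_tail_bound[OF assms] by blast
  show ?thesis by (rule carleson_if_bound_near_one[of M "7 / 8" K, OF assms(1) _ near_one]) simp
qed

lemma bigo_powr_imp_bound:
  fixes f :: "nat \<Rightarrow> real"
  assumes "f \<in> O(\<lambda>n. real n powr (- s))"
  obtains C where "\<And>n. f n \<le> C * (real n + 1) powr (- s)"
proof -
  have "(\<lambda>n. real n powr (- s)) \<in> O(\<lambda>n. (real n + 1) powr (- s))"
    by real_asymp
  with assms have "f \<in> O(\<lambda>n. (real n + 1) powr (- s))"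
    by (rule landau_o.big_trans)
  then obtain c where "c > 0" and "eventually (\<lambda>n. norm (f n) \<le> c * norm ((real n + 1) powr (- s))) at_top"
    by (elim landau_o.bigE)
  then obtain N where N: "\<And>n. n \<ge> N \<Longrightarrow> \<bar>f n\<bar> \<le> c * (real n + 1) powr (- s)"
    unfolding eventually_at_top_linorder by auto
  define C where "C = c + (\<Sum>m<N. \<bar>f m\<bar> * (real m + 1) powr s)"
  have "f n \<le> C * (real n + 1) powr (- s)" for n
  proof (cases "n \<ge> N")
    case True
    have "c \<le> C" unfolding C_def by (auto intro!: sum_nonneg)
    then show ?thesis
      using N[OF True] abs_ge_self[of "f n"] by (meson mult_right_mono order_trans powr_ge_zero)
  next
    case False
    have "f n \<le> \<bar>f n\<bar> * (real n + 1) powr s * (real n + 1) powr (- s)"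
      by (simp add: powr_minus field_simps)
    also have "\<bar>f n\<bar> * (real n + 1) powr s \<le> (\<Sum>m<N. \<bar>f m\<bar> * (real m + 1) powr s)"
      using False by (intro member_le_sum) auto
    also have "\<dots> \<le> C" unfolding C_def using \<open>c > 0\<close> by simp
    finally show ?thesis by (simp add: mult_right_mono)
  qed
  then show thesis by (rule that)
qed

theorem lemma2p3:
  fixes M :: "real measure" and \<alpha> \<beta> \<gamma> \<epsilon> :: real
  assumes "0 < \<alpha>" "\<alpha> \<le> 2" "2 \<le> \<beta>" "\<beta> < 4" "1 \<le> \<gamma>"
    and "borel_measure_01 M"
    and "\<epsilon> > 0"
    and "(\<lambda>n. moment M n) \<in> O(\<lambda>n. real n powr (- (\<alpha> / 2 + \<epsilon>)))"
  shows "carleson (\<gamma> - (\<beta> - \<alpha>) / 2) M \<longleftrightarrow> Hilbert_bounded M \<gamma> \<alpha> \<beta>"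
proof
  assume carleson: "carleson (\<gamma> - (\<beta> - \<alpha>) / 2) M"
  show "Hilbert_bounded M \<gamma> \<alpha> \<beta>"
  proof (cases "\<alpha> / 2 < \<gamma> - (\<beta> - \<alpha>) / 2")
    case True
    then have "0 < \<gamma> - (\<beta> - \<alpha>) / 2" using assms(1) by linarith
    then obtain C where "\<And>m. moment M m \<le> C * (real m + 1) powr (- (\<gamma> - (\<beta> - \<alpha>) / 2))"
      using carleson_imp_moment_bound[OF assms(6) _ carleson] by blast
    then show ?thesis
      using assms(5) by (intro moment_bound_imp_Hilbert_bounded[OF assms(6,1) _ True order_refl]) auto
  next
    case False
    then have "\<gamma> - (\<beta> - \<alpha>) / 2 \<le> \<alpha> / 2 + \<epsilon>" using assms(7) by linarith
    moreover obtain C where "\<And>m. moment M m \<le> C * (real m + 1) powr (- (\<alpha> / 2 + \<epsilon>))"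
      using bigo_powr_imp_bound[OF assms(8)] by blast
    ultimately show ?thesis
      using assms(5,7) by (intro moment_bound_imp_Hilbert_bounded[OF assms(6,1)]) auto
  qed
next
  assume "Hilbert_bounded M \<gamma> \<alpha> \<beta>"
  then show "carleson (\<gamma> - (\<beta> - \<alpha>) / 2) M"
    using assms by (intro Hilbert_bounded_imp_carleson) auto
qed

end
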